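(* Let $U_1,\dots,U_n$ be i.i.d.\ draws from the uniform distribution on $[-1/2,1/2]$, and let $U_{(1)}\le U_{(2)}\le\cdots\le U_{(n)}$ be their non-decreasing ordering. Then $$\Pr\Big(\sum_{i=1}^n \big(U_{(i)} + U_{(n+1-i)}\big)^2 \ge 1\Big) \le \frac12 .$$ *)

theory Defs
  imports "HOL-Probability.Probability"
begin

text \<open>Order statistics of a sample u 0, ..., u (n-1), 0-indexed:
  order_stat n u i is the (i+1)-th smallest value U_(i+1).\<close>
definition order_stat :: "nat \<Rightarrow> (nat \<Rightarrow> real) \<Rightarrow> nat \<Rightarrow> real" where
  "order_stat n u i = sort (map u [0..<n]) ! i"

definition unif_sample :: "nat \<Rightarrow> (nat \<Rightarrow> real) measure" where
  "unif_sample n = PiM {..<n} (\<lambda>_. uniform_measure lborel {-1/2..1/2::real})"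

end

theory Submission
  imports Defs
begin

text \<open>
  Let \<open>U(1) \<le> \<dots> \<le> U(n)\<close> be the ordered sample, put \<open>U(0) = -1/2\<close> and \<open>U(n + 1) = 1/2\<close>, and let
  \<open>L(k) = U(k + 1) - U(k)\<close>, \<open>k = 0, \<dots>, n\<close>, be the spacings.  Each \<open>U(i) + U(n + 1 - i)\<close> is a
  signed sum of spacings, and expanding the squares gives
  \<open>S = (\<Sum>k l. L(k) L(l) (\<bar>k + l - n\<bar> - \<bar>k - l\<bar>))\<close>.
  A quadratic form \<open>\<Sum>k l. L(k) L(l) H(k, l)\<close> is the integral of \<open>H(N(s), N(t))\<close> over the square
  \<open>[-1/2, 1/2]\<^sup>2\<close>, where \<open>N(s)\<close> is the number of sample points \<open>\<le> s\<close>: \<open>N\<close> takes the value \<open>k\<close> on an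
  interval of length \<open>L(k)\<close>.  Taking the expectation inside this integral, for \<open>s \<le> t\<close> the pair
  \<open>(N(s), N(t) - N(s))\<close> is trinomially distributed with cell probabilities \<open>s + 1/2\<close>, \<open>t - s\<close>,
  \<open>1/2 - t\<close>, and integrating the resulting monomials over \<open>s \<le> t\<close> gives Dirichlet integrals.  The
  outcome is \<open>E S = ((n + 1)\<^sup>2 - [n even]) / (2 (n + 1) (n + 2)) \<le> 1/2\<close>, and Markov's inequality
  concludes.
\<close>

definition count_le :: "nat \<Rightarrow> real \<Rightarrow> (nat \<Rightarrow> real) \<Rightarrow> nat" where
  "count_le n s u = card {j. j < n \<and> u j \<le> s}"

lemma count_le_eq_sum: "count_le n s u = (\<Sum>j<n. if u j \<le> s then 1 else 0)"
proof -
  have "{j. j < n \<and> u j \<le> s} = {..<n} \<inter> {j. u j \<le> s}" by auto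
  then show ?thesis unfolding count_le_def by (simp add: sum.If_cases)
qed

lemma count_le_le: "count_le n s u \<le> n"
  unfolding count_le_def by (rule order_trans[OF card_mono[of "{..<n}"]]) auto

lemma count_le_0 [simp]: "count_le 0 s u = 0"
  by (simp add: count_le_def)

lemma count_le_Suc_upd:
  "count_le (Suc n) s (u(n := y)) = count_le n s u + (if y \<le> s then 1 else 0)"
  unfolding count_le_eq_sum by (simp add: sum.lessThan_Suc)

lemma sorted_nth_le_iff:
  fixes xs :: "'a::linorder list"
  assumes sorted: "sorted xs" and i: "i < length xs"
  shows "xs ! i \<le> s \<longleftrightarrow> i < length (filter (\<lambda>y. y \<le> s) xs)"
proof -
  define K where "K = {j. j < length xs \<and> xs ! j \<le> s}"
  have length_K: "length (filter (\<lambda>y. y \<le> s) xs) = card K"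
    unfolding K_def by (rule length_filter_conv_card)
  have "{..i} \<subseteq> K" if "xs ! i \<le> s"
  proof
    fix j assume "j \<in> {..i}"
    then have "j < length xs" "xs ! j \<le> xs ! i" using i sorted_nth_mono[OF sorted] by auto
    then show "j \<in> K" using that unfolding K_def by auto
  qed
  moreover have "K \<subseteq> {..<i}" if "\<not> xs ! i \<le> s"
  proof
    fix j assume "j \<in> K"
    then have "j < length xs" "xs ! j \<le> s" unfolding K_def by auto
    then have "\<not> i \<le> j" using that sorted_nth_mono[OF sorted, of i j] by auto
    then show "j \<in> {..<i}" by simp
  qed
  moreover have "finite K" unfolding K_def by simp
  ultimately show ?thesis
    using card_mono[of K "{..i}"] card_mono[of "{..<i}" K] length_K by fastforce
qed

lemma length_filter_le_sort:
  "length (filter (\<lambda>y. y \<le> s) (sort (map u [0..<n]))) = count_le n s u"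
proof -
  have "length (filter (\<lambda>y. y \<le> s) (sort (map u [0..<n])))
      = length (filter (\<lambda>y. y \<le> s) (map u [0..<n]))"
    by (metis mset_filter mset_sort size_mset)
  also have "\<dots> = length (filter (\<lambda>j. u j \<le> s) [0..<n])"
    by (simp add: filter_map o_def)
  also have "\<dots> = count_le n s u"
    unfolding count_le_def
    by (subst length_filter_conv_card) (auto intro!: arg_cong[where f=card])
  finally show ?thesis .
qed

lemma order_stat_le_iff: "i < n \<Longrightarrow> order_stat n u i \<le> s \<longleftrightarrow> i < count_le n s u"
  unfolding order_stat_def length_filter_le_sort[symmetric]
  by (rule sorted_nth_le_iff) auto

lemma order_stat_mono: "i \<le> j \<Longrightarrow> j < n \<Longrightarrow> order_stat n u i \<le> order_stat n u j"
  unfolding order_stat_def by (rule sorted_nth_mono) auto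

lemma order_stat_in_set:
  assumes "\<And>j. j < n \<Longrightarrow> u j \<in> A" "i < n"
  shows "order_stat n u i \<in> A"
proof -
  have "order_stat n u i \<in> set (sort (map u [0..<n]))"
    unfolding order_stat_def using assms(2) by (intro nth_mem) auto
  then show ?thesis using assms(1) by auto
qed

section \<open>Spacings\<close>

definition pair_weight :: "nat \<Rightarrow> nat \<Rightarrow> nat \<Rightarrow> real" where
  "pair_weight n i k = of_bool (k \<le> i) - of_bool (n - i \<le> k)"

lemma sum_of_bool_le: "a \<le> n \<Longrightarrow> (\<Sum>i<n. of_bool (a \<le> i) :: real) = real (n - a)"
proof -
  assume "a \<le> n"
  have "{..<n} \<inter> {i. a \<le> i} = {a..<n}" by auto
  then show ?thesis by simp
qed

lemma sum_pair_weight_mult: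
  assumes "k \<le> n" "l \<le> n"
  shows "(\<Sum>i<n. pair_weight n i k * pair_weight n i l)
       = \<bar>real k + real l - real n\<bar> - \<bar>real k - real l\<bar>"
proof -
  have "pair_weight n i k * pair_weight n i l
      = of_bool (max k l \<le> i) - of_bool (max k (n - l) \<le> i)
        - of_bool (max l (n - k) \<le> i) + of_bool (n - min k l \<le> i)" for i
    unfolding pair_weight_def by (auto simp: of_bool_def split: if_splits)
  then have "(\<Sum>i<n. pair_weight n i k * pair_weight n i l)
      = real (n - max k l) - real (n - max k (n - l)) - real (n - max l (n - k))
        + real (n - (n - min k l))"
    using assms sum_of_bool_le[of "max k l" n] sum_of_bool_le[of "max k (n - l)" n]
      sum_of_bool_le[of "max l (n - k)" n] sum_of_bool_le[of "n - min k l" n]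
    by (simp only: sum.distrib sum_subtractf)
  also have "\<dots> = \<bar>real k + real l - real n\<bar> - \<bar>real k - real l\<bar>"
    using assms by (auto simp: max_def min_def of_nat_diff)
  finally show ?thesis .
qed

context
  fixes n :: nat and u :: "nat \<Rightarrow> real"
begin

text \<open>\<open>order_point n u k\<close> is \<open>U(k)\<close>, shifted against the 0-based \<open>order_stat\<close>, with
  \<open>U(0) = -1/2\<close> and \<open>U(k) = 1/2\<close> for \<open>k > n\<close>.\<close>

definition order_point :: "nat \<Rightarrow> real" where
  "order_point k = (if k = 0 then -1/2 else if k \<le> n then order_stat n u (k - 1) else 1/2)"

definition spacing :: "nat \<Rightarrow> real" where
  "spacing k = order_point (Suc k) - order_point k"

lemma sum_spacing_lessThan: "(\<Sum>k<m. spacing k) = order_point m - order_point 0"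
  unfolding spacing_def by (rule sum_lessThan_telescope)

lemma order_stat_pair_eq_sum_spacing:
  assumes "i < n"
  shows "order_stat n u i + order_stat n u (n - 1 - i) = (\<Sum>k\<le>n. spacing k * pair_weight n i k)"
proof -
  have low: "(\<Sum>k\<le>n. spacing k * of_bool (k \<le> i)) = (\<Sum>k<Suc i. spacing k)"
    using assms by (intro sum.mono_neutral_cong_right) auto
  have "(\<Sum>k<Suc n. spacing k) = sum spacing ({..<n - i} \<union> {n - i..n})"
    by (rule sum.cong) auto
  also have "\<dots> = (\<Sum>k<n - i. spacing k) + (\<Sum>k\<in>{n - i..n}. spacing k)"
    by (rule sum.union_disjoint) auto
  also have "(\<Sum>k\<in>{n - i..n}. spacing k) = (\<Sum>k\<le>n. spacing k * of_bool (n - i \<le> k))"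
    by (intro sum.mono_neutral_cong_left) auto
  finally have high: "(\<Sum>k\<le>n. spacing k * of_bool (n - i \<le> k))
      = (\<Sum>k<Suc n. spacing k) - (\<Sum>k<n - i. spacing k)"
    by simp
  have "(\<Sum>k\<le>n. spacing k * pair_weight n i k)
      = (\<Sum>k\<le>n. spacing k * of_bool (k \<le> i)) - (\<Sum>k\<le>n. spacing k * of_bool (n - i \<le> k))"
    unfolding pair_weight_def by (simp add: algebra_simps sum_subtractf)
  also have "\<dots> = (order_point (Suc i) - order_point 0)
      - ((order_point (Suc n) - order_point 0) - (order_point (n - i) - order_point 0))"
    unfolding low high sum_spacing_lessThan ..
  also have "\<dots> = order_stat n u i + order_stat n u (n - 1 - i)"
    using assms unfolding order_point_def by (auto simp: Suc_diff_Suc)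
  finally show ?thesis by simp
qed

lemma sum_order_stat_pair_square_eq:
  "(\<Sum>i<n. (order_stat n u i + order_stat n u (n - 1 - i))^2)
   = (\<Sum>k\<le>n. \<Sum>l\<le>n. spacing k * spacing l * (\<bar>real k + real l - real n\<bar> - \<bar>real k - real l\<bar>))"
proof -
  have "(\<Sum>i<n. (order_stat n u i + order_stat n u (n - 1 - i))^2)
      = (\<Sum>i<n. (\<Sum>k\<le>n. spacing k * pair_weight n i k) * (\<Sum>l\<le>n. spacing l * pair_weight n i l))"
    by (intro sum.cong refl) (simp only: order_stat_pair_eq_sum_spacing power2_eq_square lessThan_iff)
  also have "\<dots> = (\<Sum>k\<le>n. \<Sum>l\<le>n. spacing k * spacing l * (\<Sum>i<n. pair_weight n i k * pair_weight n i l))"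
    by (simp add: sum_product sum_distrib_left sum.swap[of _ "{..<n}"] mult_ac)
  also have "\<dots> = (\<Sum>k\<le>n. \<Sum>l\<le>n. spacing k * spacing l * (\<bar>real k + real l - real n\<bar> - \<bar>real k - real l\<bar>))"
    by (intro sum.cong refl) (simp add: sum_pair_weight_mult)
  finally show ?thesis .
qed

end

section \<open>Quadratic forms in the spacings as integrals over the square\<close>

abbreviation unif_interval :: "real set" where
  "unif_interval \<equiv> {-1/2..1/2}"

abbreviation unif :: "real measure" where
  "unif \<equiv> uniform_measure lborel unif_interval"

definition square_integral :: "(real \<Rightarrow> real \<Rightarrow> ennreal) \<Rightarrow> ennreal" where
  "square_integral F =
     (\<integral>\<^sup>+s. indicator unif_interval s * (\<integral>\<^sup>+t. indicator unif_interval t * F s t \<partial>lborel) \<partial>lborel)"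

lemma square_integral_cong:
  assumes "\<And>s t. s \<in> unif_interval \<Longrightarrow> t \<in> unif_interval \<Longrightarrow> F s t = G s t"
  shows "square_integral F = square_integral G"
  unfolding square_integral_def using assms
  by (intro nn_integral_cong) (auto simp: indicator_def intro!: nn_integral_cong)

definition count_pair_integral :: "nat \<Rightarrow> (nat \<Rightarrow> nat \<Rightarrow> real) \<Rightarrow> (nat \<Rightarrow> real) \<Rightarrow> ennreal" where
  "count_pair_integral n H u = square_integral (\<lambda>s t. ennreal (H (count_le n s u) (count_le n t u)))"

context
  fixes n :: nat and u :: "nat \<Rightarrow> real"
  assumes sample_in_interval: "\<And>j. j < n \<Longrightarrow> u j \<in> unif_interval"
begin

lemma order_stat_in_interval: "i < n \<Longrightarrow> order_stat n u i \<in> unif_interval"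
  by (rule order_stat_in_set[OF sample_in_interval])

lemma order_point_in_interval: "order_point n u k \<in> unif_interval"
  unfolding order_point_def using order_stat_in_interval by auto

lemma order_point_mono: "order_point n u k \<le> order_point n u (Suc k)"
proof -
  consider "k = 0" | "0 < k" "k < n" | "k = n" "0 < n" | "n < k" by linarith
  then show ?thesis
  proof cases
    case 1
    then show ?thesis using order_point_in_interval[of 1] by (auto simp: order_point_def)
  next
    case 2
    then show ?thesis unfolding order_point_def by (auto intro: order_stat_mono)
  next
    case 3
    then show ?thesis
      unfolding order_point_def using order_stat_in_interval[of "n - 1"] by auto
  next
    case 4
    then show ?thesis unfolding order_point_def by auto
  qed
qed

lemma spacing_nonneg: "0 \<le> spacing n u k"
  unfolding spacing_def using order_point_mono[of k] by simp

definition spacing_interval :: "nat \<Rightarrow> real set" where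
  "spacing_interval k = (if k < n then {order_point n u k..<order_point n u (Suc k)}
                         else {order_point n u n..1/2})"

lemma count_le_eq_iff:
  assumes s: "s \<in> unif_interval" and k: "k \<le> n"
  shows "count_le n s u = k \<longleftrightarrow> s \<in> spacing_interval k"
proof -
  have lower: "order_point n u k \<le> s \<longleftrightarrow> k \<le> count_le n s u"
  proof (cases k)
    case 0
    then show ?thesis using s by (simp add: order_point_def)
  next
    case (Suc k')
    then have "order_point n u k = order_stat n u k'" using k by (simp add: order_point_def)
    then show ?thesis using order_stat_le_iff[of k' n u s] Suc k by auto
  qed
  have upper: "s < order_point n u (Suc k) \<longleftrightarrow> count_le n s u \<le> k" if "k < n"
    using that order_stat_le_iff[of k n u s] by (auto simp: order_point_def)
  show ?thesis
  proof (cases "k < n")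
    case True
    then show ?thesis using lower upper unfolding spacing_interval_def by auto
  next
    case False
    then have "k = n" using k by auto
    then show ?thesis using lower s count_le_le[of n s u] unfolding spacing_interval_def by auto
  qed
qed

lemma spacing_interval_subset: "spacing_interval k \<subseteq> unif_interval"
  unfolding spacing_interval_def
  using order_point_in_interval[of k] order_point_in_interval[of "Suc k"]
    order_point_in_interval[of n]
  by auto

lemma emeasure_spacing_interval:
  "k \<le> n \<Longrightarrow> emeasure lborel (spacing_interval k) = ennreal (spacing n u k)"
  unfolding spacing_interval_def spacing_def using order_point_mono[of k] order_point_mono[of n]
  by (auto simp: emeasure_lborel_Ico emeasure_lborel_Icc order_point_def[of n u "Suc n"])

lemma indicator_mult_count_le:
  fixes f :: "nat \<Rightarrow> ennreal"
  shows "indicator unif_interval s * f (count_le n s u)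
       = (\<Sum>k\<le>n. f k * indicator (spacing_interval k) s)"
proof (cases "s \<in> unif_interval")
  case True
  have "s \<notin> spacing_interval k" if "k \<le> n" "k \<noteq> count_le n s u" for k
    using that count_le_eq_iff[OF True] by blast
  then have "(\<Sum>k\<le>n. f k * indicator (spacing_interval k) s)
      = (\<Sum>k\<in>{count_le n s u}. f k * indicator (spacing_interval k) s)"
    using count_le_le[of n s u] by (intro sum.mono_neutral_right) auto
  moreover have "s \<in> spacing_interval (count_le n s u)"
    using count_le_eq_iff[OF True count_le_le[of n s u]] by simp
  ultimately show ?thesis using True by simp
next
  case False
  then have "s \<notin> spacing_interval k" for k using spacing_interval_subset by blast
  then show ?thesis using False by (auto intro!: sum.neutral)
qed

lemma nn_integral_count_le:
  fixes f :: "nat \<Rightarrow> ennreal"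
  shows "(\<integral>\<^sup>+s. indicator unif_interval s * f (count_le n s u) \<partial>lborel)
       = (\<Sum>k\<le>n. ennreal (spacing n u k) * f k)"
proof -
  have "(\<integral>\<^sup>+s. indicator unif_interval s * f (count_le n s u) \<partial>lborel)
      = (\<Sum>k\<le>n. \<integral>\<^sup>+s. f k * indicator (spacing_interval k) s \<partial>lborel)"
    unfolding indicator_mult_count_le by (rule nn_integral_sum) (auto simp: spacing_interval_def)
  also have "\<dots> = (\<Sum>k\<le>n. ennreal (spacing n u k) * f k)"
    by (intro sum.cong refl)
      (auto simp: nn_integral_cmult_indicator spacing_interval_def
         emeasure_spacing_interval[symmetric] mult.commute)
  finally show ?thesis .
qed

lemma count_pair_integral_eq_spacing_form:
  assumes H: "\<And>k l. 0 \<le> H k l"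
  shows "count_pair_integral n H u
       = ennreal (\<Sum>k\<le>n. \<Sum>l\<le>n. spacing n u k * spacing n u l * H k l)"
proof -
  have "count_pair_integral n H u
      = (\<integral>\<^sup>+s. indicator unif_interval s *
           (\<Sum>l\<le>n. ennreal (spacing n u l) * ennreal (H (count_le n s u) l)) \<partial>lborel)"
    unfolding count_pair_integral_def square_integral_def
    by (intro nn_integral_cong arg_cong2[where f="(*)"] refl nn_integral_count_le)
  also have "\<dots> = (\<Sum>k\<le>n. ennreal (spacing n u k) *
                      (\<Sum>l\<le>n. ennreal (spacing n u l) * ennreal (H k l)))"
    by (rule nn_integral_count_le[where f="\<lambda>k. \<Sum>l\<le>n. ennreal (spacing n u l) * ennreal (H k l)"])
  also have "\<dots> = (\<Sum>k\<le>n. \<Sum>l\<le>n. ennreal (spacing n u k * spacing n u l * H k l))"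
    using spacing_nonneg H by (simp add: sum_distrib_left ennreal_mult mult.assoc)
  also have "\<dots> = ennreal (\<Sum>k\<le>n. \<Sum>l\<le>n. spacing n u k * spacing n u l * H k l)"
    using spacing_nonneg H by (simp add: sum_nonneg)
  finally show ?thesis .
qed

lemma sum_order_stat_pair_square_add:
  "ennreal (\<Sum>i<n. (order_stat n u i + order_stat n u (n - 1 - i))^2)
     + count_pair_integral n (\<lambda>k l. \<bar>real k - real l\<bar>) u
   = count_pair_integral n (\<lambda>k l. \<bar>real k + real l - real n\<bar>) u"
proof -
  define Q where "Q H = (\<Sum>k\<le>n. \<Sum>l\<le>n. spacing n u k * spacing n u l * H k l)" for H
  let ?S = "\<Sum>i<n. (order_stat n u i + order_stat n u (n - 1 - i))^2"
  have "Q (\<lambda>k l. \<bar>real k + real l - real n\<bar>) - Q (\<lambda>k l. \<bar>real k - real l\<bar>) = ?S"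
    unfolding Q_def sum_order_stat_pair_square_eq by (simp only: sum_subtractf right_diff_distrib)
  moreover have "0 \<le> ?S" "0 \<le> Q (\<lambda>k l. \<bar>real k - real l\<bar>)"
    unfolding Q_def using spacing_nonneg by (auto intro!: sum_nonneg)
  ultimately have "ennreal ?S + ennreal (Q (\<lambda>k l. \<bar>real k - real l\<bar>))
      = ennreal (Q (\<lambda>k l. \<bar>real k + real l - real n\<bar>))"
    by (simp flip: ennreal_plus)
  then show ?thesis
    unfolding count_pair_integral_eq_spacing_form[OF abs_ge_zero] Q_def .
qed

end

section \<open>The joint law of two counts\<close>

text \<open>Pascal-type recursion for \<open>n! / (\<alpha>! \<beta>! (n - \<alpha> - \<beta>)!)\<close>, see \<open>trinomial_mult_fact\<close>.\<close>

fun trinomial :: "nat \<Rightarrow> nat \<Rightarrow> nat \<Rightarrow> nat" where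
  "trinomial 0 \<alpha> \<beta> = (if \<alpha> = 0 \<and> \<beta> = 0 then 1 else 0)"
| "trinomial (Suc n) \<alpha> \<beta> = (case \<alpha> of 0 \<Rightarrow> 0 | Suc \<alpha>' \<Rightarrow> trinomial n \<alpha>' \<beta>)
     + (case \<beta> of 0 \<Rightarrow> 0 | Suc \<beta>' \<Rightarrow> trinomial n \<alpha> \<beta>') + trinomial n \<alpha> \<beta>"

lemma trinomial_eq_0: "n < \<alpha> + \<beta> \<Longrightarrow> trinomial n \<alpha> \<beta> = 0"
  by (induction n arbitrary: \<alpha> \<beta>) (auto split: nat.splits)

lemma trinomial_mult_fact:
  "\<alpha> + \<beta> \<le> n \<Longrightarrow> trinomial n \<alpha> \<beta> * (fact \<alpha> * fact \<beta> * fact (n - \<alpha> - \<beta>)) = (fact n :: nat)"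
proof (induction n arbitrary: \<alpha> \<beta>)
  case 0
  then show ?case by simp
next
  case (Suc n)
  have first: "(case \<alpha> of 0 \<Rightarrow> 0 | Suc a \<Rightarrow> trinomial n a \<beta>) * (fact \<alpha> * fact \<beta> * fact (Suc n - \<alpha> - \<beta>))
      = \<alpha> * fact n"
  proof (cases \<alpha>)
    case (Suc a)
    then have "trinomial n a \<beta> * (fact a * fact \<beta> * fact (n - a - \<beta>)) = fact n"
      using Suc.prems by (intro Suc.IH) simp
    then show ?thesis using Suc by (simp add: algebra_simps)
  qed simp
  have second: "(case \<beta> of 0 \<Rightarrow> 0 | Suc b \<Rightarrow> trinomial n \<alpha> b) * (fact \<alpha> * fact \<beta> * fact (Suc n - \<alpha> - \<beta>))
      = \<beta> * fact n"
  proof (cases \<beta>)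
    case (Suc b)
    then have "trinomial n \<alpha> b * (fact \<alpha> * fact b * fact (n - \<alpha> - b)) = fact n"
      using Suc.prems by (intro Suc.IH) simp
    moreover have "Suc n - \<alpha> - \<beta> = n - \<alpha> - b" using Suc by simp
    ultimately show ?thesis using Suc by (simp add: algebra_simps)
  qed simp
  have third: "trinomial n \<alpha> \<beta> * (fact \<alpha> * fact \<beta> * fact (Suc n - \<alpha> - \<beta>)) = (Suc n - \<alpha> - \<beta>) * fact n"
  proof (cases "\<alpha> + \<beta> \<le> n")
    case True
    then have "trinomial n \<alpha> \<beta> * (fact \<alpha> * fact \<beta> * fact (n - \<alpha> - \<beta>)) = fact n" by (rule Suc.IH)
    moreover have "Suc n - \<alpha> - \<beta> = Suc (n - \<alpha> - \<beta>)" using True by simp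
    ultimately show ?thesis by (simp add: algebra_simps)
  next
    case False
    then show ?thesis using Suc.prems by (simp add: trinomial_eq_0)
  qed
  have "trinomial (Suc n) \<alpha> \<beta> * (fact \<alpha> * fact \<beta> * fact (Suc n - \<alpha> - \<beta>))
      = (\<alpha> + \<beta> + (Suc n - \<alpha> - \<beta>)) * fact n"
    unfolding trinomial.simps using first second third by (simp add: algebra_simps)
  also have "\<alpha> + \<beta> + (Suc n - \<alpha> - \<beta>) = Suc n" using Suc.prems by simp
  finally show ?case by simp
qed

definition trinomial_sum :: "nat \<Rightarrow> real \<Rightarrow> real \<Rightarrow> real \<Rightarrow> (nat \<Rightarrow> nat \<Rightarrow> real) \<Rightarrow> real" where
  "trinomial_sum n a b c G =
     (\<Sum>\<alpha>\<le>n. \<Sum>\<beta>\<le>n. real (trinomial n \<alpha> \<beta>) * (a^\<alpha> * b^\<beta> * c^(n - \<alpha> - \<beta>)) * G \<alpha> \<beta>)"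

lemma trinomial_sum_0: "trinomial_sum 0 a b c G = G 0 0"
  by (simp add: trinomial_sum_def)

lemma sum_trinomial_atMost_Suc:
  "(\<Sum>\<alpha>\<le>Suc n. \<Sum>\<beta>\<le>Suc n. real (trinomial n \<alpha> \<beta>) * f \<alpha> \<beta>)
   = (\<Sum>\<alpha>\<le>n. \<Sum>\<beta>\<le>n. real (trinomial n \<alpha> \<beta>) * f \<alpha> \<beta>)"
  by (simp add: sum.atMost_Suc trinomial_eq_0)

lemma sum_trinomial_shift_fst:
  "(\<Sum>\<alpha>\<le>Suc n. \<Sum>\<beta>\<le>Suc n. real (case \<alpha> of 0 \<Rightarrow> 0 | Suc \<alpha>' \<Rightarrow> trinomial n \<alpha>' \<beta>) * f \<alpha> \<beta>)
   = (\<Sum>\<alpha>\<le>n. \<Sum>\<beta>\<le>n. real (trinomial n \<alpha> \<beta>) * f (Suc \<alpha>) \<beta>)"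
proof -
  have "(\<Sum>\<alpha>\<le>Suc n. \<Sum>\<beta>\<le>Suc n. real (case \<alpha> of 0 \<Rightarrow> 0 | Suc \<alpha>' \<Rightarrow> trinomial n \<alpha>' \<beta>) * f \<alpha> \<beta>)
      = (\<Sum>\<alpha>\<le>n. \<Sum>\<beta>\<le>Suc n. real (trinomial n \<alpha> \<beta>) * f (Suc \<alpha>) \<beta>)"
    by (subst sum.atMost_Suc_shift) (simp del: atMost_Suc sum.atMost_Suc)
  then show ?thesis by (simp add: sum.atMost_Suc trinomial_eq_0)
qed

lemma sum_trinomial_shift_snd:
  "(\<Sum>\<alpha>\<le>Suc n. \<Sum>\<beta>\<le>Suc n. real (case \<beta> of 0 \<Rightarrow> 0 | Suc \<beta>' \<Rightarrow> trinomial n \<alpha> \<beta>') * f \<alpha> \<beta>)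
   = (\<Sum>\<alpha>\<le>n. \<Sum>\<beta>\<le>n. real (trinomial n \<alpha> \<beta>) * f \<alpha> (Suc \<beta>))"
proof -
  have "(\<Sum>\<alpha>\<le>Suc n. \<Sum>\<beta>\<le>Suc n. real (case \<beta> of 0 \<Rightarrow> 0 | Suc \<beta>' \<Rightarrow> trinomial n \<alpha> \<beta>') * f \<alpha> \<beta>)
      = (\<Sum>\<alpha>\<le>Suc n. \<Sum>\<beta>\<le>n. real (trinomial n \<alpha> \<beta>) * f \<alpha> (Suc \<beta>))"
    by (rule sum.cong[OF refl], subst sum.atMost_Suc_shift) (simp del: atMost_Suc sum.atMost_Suc)
  then show ?thesis by (simp add: sum.atMost_Suc trinomial_eq_0)
qed

lemma trinomial_sum_Suc:
  "trinomial_sum (Suc n) a b c G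
   = trinomial_sum n a b c (\<lambda>\<alpha> \<beta>. a * G (Suc \<alpha>) \<beta> + b * G \<alpha> (Suc \<beta>) + c * G \<alpha> \<beta>)"
proof -
  let ?W = "\<lambda>n \<alpha> \<beta>. a^\<alpha> * b^\<beta> * c^(n - \<alpha> - \<beta>)"
  have "trinomial_sum (Suc n) a b c G
      = (\<Sum>\<alpha>\<le>Suc n. \<Sum>\<beta>\<le>Suc n.
           real (case \<alpha> of 0 \<Rightarrow> 0 | Suc \<alpha>' \<Rightarrow> trinomial n \<alpha>' \<beta>) * (?W (Suc n) \<alpha> \<beta> * G \<alpha> \<beta>))
      + (\<Sum>\<alpha>\<le>Suc n. \<Sum>\<beta>\<le>Suc n.
           real (case \<beta> of 0 \<Rightarrow> 0 | Suc \<beta>' \<Rightarrow> trinomial n \<alpha> \<beta>') * (?W (Suc n) \<alpha> \<beta> * G \<alpha> \<beta>))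
      + (\<Sum>\<alpha>\<le>Suc n. \<Sum>\<beta>\<le>Suc n. real (trinomial n \<alpha> \<beta>) * (?W (Suc n) \<alpha> \<beta> * G \<alpha> \<beta>))"
    unfolding trinomial_sum_def
    by (simp only: trinomial.simps of_nat_add distrib_right sum.distrib mult.assoc)
  also have "\<dots> = (\<Sum>\<alpha>\<le>n. \<Sum>\<beta>\<le>n. real (trinomial n \<alpha> \<beta>) *
         (?W (Suc n) (Suc \<alpha>) \<beta> * G (Suc \<alpha>) \<beta> + ?W (Suc n) \<alpha> (Suc \<beta>) * G \<alpha> (Suc \<beta>)
          + ?W (Suc n) \<alpha> \<beta> * G \<alpha> \<beta>))"
    unfolding sum_trinomial_shift_fst sum_trinomial_shift_snd sum_trinomial_atMost_Suc
    by (simp only: sum.distrib[symmetric] distrib_left)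
  also have "\<dots> = trinomial_sum n a b c (\<lambda>\<alpha> \<beta>. a * G (Suc \<alpha>) \<beta> + b * G \<alpha> (Suc \<beta>) + c * G \<alpha> \<beta>)"
    unfolding trinomial_sum_def
  proof (intro sum.cong refl)
    fix \<alpha> \<beta>
    show "real (trinomial n \<alpha> \<beta>) *
         (?W (Suc n) (Suc \<alpha>) \<beta> * G (Suc \<alpha>) \<beta> + ?W (Suc n) \<alpha> (Suc \<beta>) * G \<alpha> (Suc \<beta>)
          + ?W (Suc n) \<alpha> \<beta> * G \<alpha> \<beta>)
      = real (trinomial n \<alpha> \<beta>) * ?W n \<alpha> \<beta> * (a * G (Suc \<alpha>) \<beta> + b * G \<alpha> (Suc \<beta>) + c * G \<alpha> \<beta>)"
      by (cases "\<alpha> + \<beta> \<le> n") (auto simp: trinomial_eq_0 Suc_diff_le algebra_simps)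
  qed
  finally show ?thesis .
qed

lemma prob_space_unif: "prob_space unif"
  by (rule prob_space_uniform_measure) (simp_all add: emeasure_lborel_Icc)

lemma prob_space_unif_sample: "prob_space (unif_sample n)"
  unfolding unif_sample_def by (rule prob_space_PiM) (rule prob_space_unif)

lemma measurable_count_le_pair [measurable]:
  "n \<le> m \<Longrightarrow> (\<lambda>u. G (count_le n lo u) (count_le n hi u) :: ennreal)
     \<in> borel_measurable (PiM {..<m} (\<lambda>_. unif))"
  unfolding count_le_eq_sum by measurable

lemma nn_integral_unif_two_thresholds:
  fixes G :: "nat \<Rightarrow> nat \<Rightarrow> real"
  assumes "lo \<le> hi" "lo \<in> unif_interval" "hi \<in> unif_interval" and G: "\<And>x y. 0 \<le> G x y"
  shows "(\<integral>\<^sup>+y. ennreal (G (A + (if y \<le> lo then 1 else 0)) (C + (if y \<le> hi then 1 else 0))) \<partial>unif)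
     = ennreal ((lo + 1/2) * G (Suc A) (Suc C) + (hi - lo) * G A (Suc C) + (1/2 - hi) * G A C)"
proof -
  have nonneg: "0 \<le> lo + 1/2" "0 \<le> hi - lo" "0 \<le> 1/2 - hi" using assms by auto
  have "(\<integral>\<^sup>+y. ennreal (G (A + (if y \<le> lo then 1 else 0)) (C + (if y \<le> hi then 1 else 0))) \<partial>unif)
      = (\<integral>\<^sup>+y. ennreal (G (Suc A) (Suc C)) * indicator {-1/2..lo} y
           + ennreal (G A (Suc C)) * indicator {lo<..hi} y
           + ennreal (G A C) * indicator {hi<..1/2} y \<partial>lborel)"
    using assms
    by (subst nn_integral_uniform_measure)
      (auto simp: emeasure_lborel_Icc divide_ennreal_def indicator_def intro!: nn_integral_cong)
  also have "\<dots> = ennreal (G (Suc A) (Suc C)) * ennreal (lo + 1/2)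
      + ennreal (G A (Suc C)) * ennreal (hi - lo) + ennreal (G A C) * ennreal (1/2 - hi)"
    using assms
    by (simp add: nn_integral_add nn_integral_cmult_indicator emeasure_lborel_Icc emeasure_lborel_Ioc)
  also have "\<dots> = ennreal ((lo + 1/2) * G (Suc A) (Suc C) + (hi - lo) * G A (Suc C) + (1/2 - hi) * G A C)"
    using nonneg G by (simp add: ennreal_mult ennreal_plus mult.commute)
  finally show ?thesis .
qed

lemma nn_integral_count_le_pair:
  assumes "lo \<le> hi" "lo \<in> unif_interval" "hi \<in> unif_interval" and "\<And>x y. 0 \<le> G x y"
  shows "(\<integral>\<^sup>+u. ennreal (G (count_le n lo u) (count_le n hi u)) \<partial>unif_sample n)
       = ennreal (trinomial_sum n (lo + 1/2) (hi - lo) (1/2 - hi) (\<lambda>\<alpha> \<beta>. G \<alpha> (\<alpha> + \<beta>)))"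
  using assms(4)
proof (induction n arbitrary: G)
  case 0
  then show ?case by (simp add: unif_sample_def PiM_empty trinomial_sum_0)
next
  case (Suc n)
  interpret product_sigma_finite "\<lambda>_::nat. unif"
    using prob_space_imp_sigma_finite[OF prob_space_unif] by (simp add: product_sigma_finite_def)
  define G' where "G' A C = (lo + 1/2) * G (Suc A) (Suc C) + (hi - lo) * G A (Suc C) + (1/2 - hi) * G A C"
    for A C
  have "0 \<le> G' A C" for A C
    using Suc.prems assms unfolding G'_def by (auto intro!: add_nonneg_nonneg mult_nonneg_nonneg)
  have "(\<integral>\<^sup>+u. ennreal (G (count_le (Suc n) lo u) (count_le (Suc n) hi u)) \<partial>unif_sample (Suc n))
      = (\<integral>\<^sup>+x. (\<integral>\<^sup>+y. ennreal (G (count_le (Suc n) lo (x(n := y))) (count_le (Suc n) hi (x(n := y))))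
            \<partial>unif) \<partial>PiM {..<n} (\<lambda>_. unif))"
    using measurable_count_le_pair[of "Suc n" "Suc n", unfolded lessThan_Suc]
    unfolding unif_sample_def lessThan_Suc by (intro product_nn_integral_insert) auto
  also have "\<dots> = (\<integral>\<^sup>+x. ennreal (G' (count_le n lo x) (count_le n hi x)) \<partial>unif_sample n)"
    unfolding count_le_Suc_upd G'_def unif_sample_def using assms Suc.prems
    by (intro nn_integral_cong nn_integral_unif_two_thresholds) auto
  also have "\<dots> = ennreal (trinomial_sum n (lo + 1/2) (hi - lo) (1/2 - hi) (\<lambda>\<alpha> \<beta>. G' \<alpha> (\<alpha> + \<beta>)))"
    by (rule Suc.IH) fact
  also have "\<dots> = ennreal (trinomial_sum (Suc n) (lo + 1/2) (hi - lo) (1/2 - hi) (\<lambda>\<alpha> \<beta>. G \<alpha> (\<alpha> + \<beta>)))"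
    unfolding trinomial_sum_Suc G'_def by simp
  finally show ?case .
qed

section \<open>Dirichlet integrals\<close>

lemma beta_integral_recurrence:
  fixes L :: real
  shows "L * (fact p * fact q / fact (p + q + 1) * L^(p + q + 1))
          - fact (Suc p) * fact q / fact (Suc p + q + 1) * L^(Suc p + q + 1)
        = fact p * fact (Suc q) / fact (p + Suc q + 1) * L^(p + Suc q + 1)"
proof -
  define F :: real where "F = fact (p + q + 1)"
  define M where "M = L ^ (p + q + 1)"
  define S where "S = real p + real q + 2"
  have F_S: "F \<noteq> 0" "S \<noteq> 0" unfolding F_def S_def by simp_all
  have eqs: "(fact (Suc p + q + 1) :: real) = S * F" "(fact (p + Suc q + 1) :: real) = S * F"
    "L^(Suc p + q + 1) = L * M" "L^(p + Suc q + 1) = L * M"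
    "(fact (Suc p) :: real) = (real p + 1) * fact p" "(fact (Suc q) :: real) = (real q + 1) * fact q"
    unfolding F_def M_def S_def by (simp_all add: algebra_simps)
  with F_S show ?thesis unfolding eqs F_def[symmetric] M_def[symmetric]
    by (simp add: field_simps) (simp add: S_def algebra_simps)
qed

lemma has_integral_power_mult_power:
  fixes x y :: real
  assumes "x \<le> y"
  shows "((\<lambda>t. (t - x)^p * (y - t)^q) has_integral
           (fact p * fact q / fact (p + q + 1) * (y - x)^(p + q + 1))) {x..y}"
proof (induction q arbitrary: p)
  case 0
  have "((\<lambda>t. (t - x)^p) has_integral ((y - x)^(Suc p) / real (Suc p) - (x - x)^(Suc p) / real (Suc p))) {x..y}"
  proof (rule fundamental_theorem_of_calculus[OF assms])
    fix t assume "t \<in> {x..y}"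
    show "((\<lambda>t. (t - x)^(Suc p) / real (Suc p)) has_vector_derivative (t - x)^p) (at t within {x..y})"
      unfolding has_real_derivative_iff_has_vector_derivative[symmetric]
      by (auto intro!: derivative_eq_intros simp del: of_nat_Suc) (cases p, auto simp: field_simps)
  qed
  moreover have "fact p * fact 0 / fact (p + 0 + 1) * (y - x)^(p + 0 + 1) = (y - x)^(Suc p) / real (Suc p)"
    by (simp add: fact_Suc del: of_nat_Suc)
  ultimately show ?case by simp
next
  case (Suc q)
  have "(\<lambda>t. (t - x)^p * (y - t)^(Suc q))
      = (\<lambda>t. (y - x) * ((t - x)^p * (y - t)^q) - (t - x)^(Suc p) * (y - t)^q)"
    by (rule ext) (simp add: algebra_simps)
  then show ?case
    using has_integral_diff[OF has_integral_mult_right[OF Suc.IH[of p], of "y - x"] Suc.IH[of "Suc p"]]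
    unfolding beta_integral_recurrence by (simp only:)
qed

lemma nn_integral_power_mult_power:
  fixes x y c :: real
  assumes "x \<le> y" "0 \<le> c"
  shows "(\<integral>\<^sup>+t. indicator {x..y} t * ennreal (c * ((t - x)^p * (y - t)^q)) \<partial>lborel)
       = ennreal (c * (fact p * fact q / fact (p + q + 1) * (y - x)^(p + q + 1)))"
proof -
  have "(\<integral>\<^sup>+t. ennreal (c * ((t - x)^p * (y - t)^q)) * indicator {x..y} t \<partial>lborel)
      = ennreal (c * (fact p * fact q / fact (p + q + 1) * (y - x)^(p + q + 1)))"
    using assms
    by (intro nn_integral_has_integral_lebesgue' has_integral_mult_right has_integral_power_mult_power)
      auto
  then show ?thesis by (simp add: mult.commute)
qed

lemma nn_integral_indicator_Ico_eq_Icc: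
  fixes a b :: real
  shows   "(\<integral>\<^sup>+t. indicator {a..<b} t * f t \<partial>lborel) = (\<integral>\<^sup>+t. indicator {a..b} t * f t \<partial>lborel)"
proof (rule nn_integral_cong_AE)
  show "AE t in lborel. indicator {a..<b} t * f t = indicator {a..b} t * f t"
    using AE_lborel_singleton[of b] by eventually_elim (auto simp: indicator_def)
qed

lemma dirichlet_integral_outer_min:
  "(\<integral>\<^sup>+s. indicator unif_interval s *
      (\<integral>\<^sup>+t. indicator {s..1/2} t * ennreal ((s + 1/2)^\<alpha> * (t - s)^\<beta> * (1/2 - t)^\<gamma>) \<partial>lborel) \<partial>lborel)
   = ennreal (fact \<alpha> * fact \<beta> * fact \<gamma> / fact (\<alpha> + \<beta> + \<gamma> + 2))"
proof -
  define C :: real where "C = fact \<beta> * fact \<gamma> / fact (\<beta> + \<gamma> + 1)"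
  have "(\<integral>\<^sup>+t. indicator {s..1/2} t * ennreal ((s + 1/2)^\<alpha> * (t - s)^\<beta> * (1/2 - t)^\<gamma>) \<partial>lborel)
      = ennreal (C * ((s - (-1/2))^\<alpha> * (1/2 - s)^(\<beta> + \<gamma> + 1)))" if "s \<in> unif_interval" for s
    using nn_integral_power_mult_power[of s "1/2" "(s + 1/2)^\<alpha>" \<beta> \<gamma>] that
    by (simp add: C_def mult_ac)
  then have "(\<integral>\<^sup>+s. indicator unif_interval s *
      (\<integral>\<^sup>+t. indicator {s..1/2} t * ennreal ((s + 1/2)^\<alpha> * (t - s)^\<beta> * (1/2 - t)^\<gamma>) \<partial>lborel) \<partial>lborel)
    = (\<integral>\<^sup>+s. indicator unif_interval s * ennreal (C * ((s - (-1/2))^\<alpha> * (1/2 - s)^(\<beta> + \<gamma> + 1))) \<partial>lborel)"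
    by (intro nn_integral_cong) (simp add: indicator_def)
  also have "\<dots> = ennreal (C * (fact \<alpha> * fact (\<beta> + \<gamma> + 1) / fact (\<alpha> + (\<beta> + \<gamma> + 1) + 1)))"
    using nn_integral_power_mult_power[of "-1/2" "1/2" C \<alpha> "\<beta> + \<gamma> + 1"] by (simp add: C_def)
  also have "C * (fact \<alpha> * fact (\<beta> + \<gamma> + 1) / fact (\<alpha> + (\<beta> + \<gamma> + 1) + 1))
      = fact \<alpha> * fact \<beta> * fact \<gamma> / fact (\<alpha> + \<beta> + \<gamma> + 2)"
  proof -
    have cancel: "x / F * (a * F / G) = a * x / G" if "F \<noteq> 0" for x a F G :: real
      using that by simp
    have "\<alpha> + (\<beta> + \<gamma> + 1) + 1 = \<alpha> + \<beta> + \<gamma> + 2" by simp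
    then show ?thesis unfolding C_def by (subst cancel) (simp_all add: ac_simps)
  qed
  finally show ?thesis .
qed

lemma dirichlet_integral_outer_max:
  "(\<integral>\<^sup>+s. indicator unif_interval s *
      (\<integral>\<^sup>+t. indicator {-1/2..<s} t * ennreal ((t + 1/2)^\<alpha> * (s - t)^\<beta> * (1/2 - s)^\<gamma>) \<partial>lborel) \<partial>lborel)
   = ennreal (fact \<alpha> * fact \<beta> * fact \<gamma> / fact (\<alpha> + \<beta> + \<gamma> + 2))"
proof -
  define D :: real where "D = fact \<alpha> * fact \<beta> / fact (\<alpha> + \<beta> + 1)"
  have "(\<integral>\<^sup>+t. indicator {-1/2..<s} t * ennreal ((t + 1/2)^\<alpha> * (s - t)^\<beta> * (1/2 - s)^\<gamma>) \<partial>lborel)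
      = ennreal (D * ((s - (-1/2))^(\<alpha> + \<beta> + 1) * (1/2 - s)^\<gamma>))" if "s \<in> unif_interval" for s
    using nn_integral_power_mult_power[of "-1/2" s "(1/2 - s)^\<gamma>" \<alpha> \<beta>] that
    unfolding nn_integral_indicator_Ico_eq_Icc by (simp add: D_def mult_ac)
  then have "(\<integral>\<^sup>+s. indicator unif_interval s *
      (\<integral>\<^sup>+t. indicator {-1/2..<s} t * ennreal ((t + 1/2)^\<alpha> * (s - t)^\<beta> * (1/2 - s)^\<gamma>) \<partial>lborel) \<partial>lborel)
    = (\<integral>\<^sup>+s. indicator unif_interval s * ennreal (D * ((s - (-1/2))^(\<alpha> + \<beta> + 1) * (1/2 - s)^\<gamma>)) \<partial>lborel)"
    by (intro nn_integral_cong) (simp add: indicator_def)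
  also have "\<dots> = ennreal (D * (fact (\<alpha> + \<beta> + 1) * fact \<gamma> / fact (\<alpha> + \<beta> + 1 + \<gamma> + 1)))"
    using nn_integral_power_mult_power[of "-1/2" "1/2" D "\<alpha> + \<beta> + 1" \<gamma>] by (simp add: D_def)
  also have "D * (fact (\<alpha> + \<beta> + 1) * fact \<gamma> / fact (\<alpha> + \<beta> + 1 + \<gamma> + 1))
      = fact \<alpha> * fact \<beta> * fact \<gamma> / fact (\<alpha> + \<beta> + \<gamma> + 2)"
  proof -
    have cancel: "x / F * (F * a / G) = x * a / G" if "F \<noteq> 0" for x a F G :: real
      using that by simp
    have "\<alpha> + \<beta> + 1 + \<gamma> + 1 = \<alpha> + \<beta> + \<gamma> + 2" by simp
    then show ?thesis unfolding D_def by (subst cancel) simp_all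
  qed
  finally show ?thesis .
qed

lemma trinomial_dirichlet_coefficient:
  assumes "\<alpha> + \<beta> \<le> n"
  shows "real (trinomial n \<alpha> \<beta>)
           * (2 * (fact \<alpha> * fact \<beta> * fact (n - \<alpha> - \<beta>) / fact (\<alpha> + \<beta> + (n - \<alpha> - \<beta>) + 2)))
         = 2 / ((real n + 1) * (real n + 2))"
proof -
  have cancel: "t * (2 * (X / (d * N))) = 2 / d" if "t * X = N" "N \<noteq> 0" "d \<noteq> 0" for t X d N :: real
    using that by (simp add: field_simps flip: that(1))
  have "real (trinomial n \<alpha> \<beta>) * (fact \<alpha> * fact \<beta> * fact (n - \<alpha> - \<beta>)) = fact n"
    using arg_cong[OF trinomial_mult_fact[OF assms], of real] by (simp only: of_nat_mult of_nat_fact)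
  moreover have "(fact (\<alpha> + \<beta> + (n - \<alpha> - \<beta>) + 2) :: real) = ((real n + 1) * (real n + 2)) * fact n"
    using assms by (simp add: algebra_simps)
  ultimately show ?thesis by (simp only:) (rule cancel; simp)
qed

lemma square_integral_sum:
  assumes "finite P" and measurable_F: "\<And>p. (\<lambda>x. F p (fst x) (snd x)) \<in> borel_measurable (borel \<Otimes>\<^sub>M borel)"
  shows "square_integral (\<lambda>s t. \<Sum>p\<in>P. c p * F p s t) = (\<Sum>p\<in>P. c p * square_integral (F p))"
proof -
  note measurable_F [measurable]
  have [measurable]: "F p s \<in> borel_measurable borel" for p s
    using measurable_Pair2[OF measurable_F, of s] by simp
  have "(\<integral>\<^sup>+t. indicator unif_interval t * (\<Sum>p\<in>P. c p * F p s t) \<partial>lborel)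
      = (\<Sum>p\<in>P. c p * (\<integral>\<^sup>+t. indicator unif_interval t * F p s t \<partial>lborel))" for s
    by (simp add: sum_distrib_left mult.left_commute nn_integral_sum nn_integral_cmult)
  then have "square_integral (\<lambda>s t. \<Sum>p\<in>P. c p * F p s t)
      = (\<integral>\<^sup>+s. (\<Sum>p\<in>P. c p * (indicator unif_interval s *
           (\<integral>\<^sup>+t. indicator unif_interval t * F p s t \<partial>lborel))) \<partial>lborel)"
    unfolding square_integral_def by (simp add: sum_distrib_left mult.left_commute)
  also have "\<dots> = (\<Sum>p\<in>P. c p * square_integral (F p))"
    unfolding square_integral_def using assms(1) by (simp add: nn_integral_sum nn_integral_cmult)
  finally show ?thesis .
qed

lemma square_integral_monomial:
  "square_integral (\<lambda>s t. ennreal ((min s t + 1/2)^\<alpha> * (max s t - min s t)^\<beta> * (1/2 - max s t)^\<gamma>))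
   = ennreal (2 * (fact \<alpha> * fact \<beta> * fact \<gamma> / fact (\<alpha> + \<beta> + \<gamma> + 2)))"
proof -
  define W where "W lo hi = ennreal ((lo + 1/2)^\<alpha> * (hi - lo)^\<beta> * (1/2 - hi)^\<gamma>)" for lo hi :: real
  define K1 where "K1 s = (\<integral>\<^sup>+t. indicator {s..1/2} t * W s t \<partial>lborel)" for s
  define K2 where "K2 s = (\<integral>\<^sup>+t. indicator {-1/2..<s} t * W t s \<partial>lborel)" for s
  have [measurable]: "(\<lambda>s. indicator unif_interval s * K1 s) \<in> borel_measurable lborel"
    "(\<lambda>s. indicator unif_interval s * K2 s) \<in> borel_measurable lborel"
    unfolding K1_def K2_def W_def indicator_def of_bool_def atLeastAtMost_iff atLeastLessThan_iff
    by measurable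
  have "(\<integral>\<^sup>+t. indicator unif_interval t * W (min s t) (max s t) \<partial>lborel) = K1 s + K2 s"
    if "s \<in> unif_interval" for s
  proof -
    have "indicator unif_interval t * W (min s t) (max s t)
        = indicator {s..1/2} t * W s t + indicator {-1/2..<s} t * W t s" for t
      using that by (auto simp: indicator_def min_def max_def)
    then show ?thesis
      unfolding K1_def K2_def W_def by (simp add: nn_integral_add)
  qed
  then have "square_integral (\<lambda>s t. W (min s t) (max s t))
     = (\<integral>\<^sup>+s. indicator unif_interval s * K1 s + indicator unif_interval s * K2 s \<partial>lborel)"
    unfolding square_integral_def by (intro nn_integral_cong) (simp add: indicator_def distrib_left)
  also have "\<dots> = (\<integral>\<^sup>+s. indicator unif_interval s * K1 s \<partial>lborel)
      + (\<integral>\<^sup>+s. indicator unif_interval s * K2 s \<partial>lborel)"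
    by (intro nn_integral_add) measurable
  also have "\<dots> = ennreal (fact \<alpha> * fact \<beta> * fact \<gamma> / fact (\<alpha> + \<beta> + \<gamma> + 2))
      + ennreal (fact \<alpha> * fact \<beta> * fact \<gamma> / fact (\<alpha> + \<beta> + \<gamma> + 2))"
    unfolding K1_def K2_def W_def
    by (simp only: dirichlet_integral_outer_min dirichlet_integral_outer_max)
  finally show ?thesis unfolding W_def by (simp add: mult_ac flip: ennreal_plus)
qed

lemma square_integral_trinomial_sum:
  assumes G: "\<And>\<alpha> \<beta>. 0 \<le> G \<alpha> \<beta>"
  shows "square_integral (\<lambda>s t. ennreal (trinomial_sum n (min s t + 1/2) (max s t - min s t) (1/2 - max s t) G))
   = ennreal (2 / ((real n + 1) * (real n + 2)) * (\<Sum>\<alpha>\<le>n. \<Sum>\<beta>\<le>n. if \<alpha> + \<beta> \<le> n then G \<alpha> \<beta> else 0))"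
proof -
  define P where "P = {..n} \<times> {..n}"
  define c where "c p = real (trinomial n (fst p) (snd p)) * G (fst p) (snd p)" for p
  define m :: "nat \<times> nat \<Rightarrow> real \<Rightarrow> real \<Rightarrow> real" where
    "m p s t = (min s t + 1/2)^fst p * (max s t - min s t)^snd p * (1/2 - max s t)^(n - fst p - snd p)"
    for p s t
  have c_nonneg: "0 \<le> c p" for p
    unfolding c_def using G by simp
  have "ennreal (trinomial_sum n (min s t + 1/2) (max s t - min s t) (1/2 - max s t) G)
      = (\<Sum>p\<in>P. ennreal (c p) * ennreal (m p s t))" if "s \<in> unif_interval" "t \<in> unif_interval" for s t
  proof -
    have "0 \<le> m p s t" for p using that by (auto simp: m_def intro!: mult_nonneg_nonneg)
    moreover have "trinomial_sum n (min s t + 1/2) (max s t - min s t) (1/2 - max s t) G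
        = (\<Sum>p\<in>P. c p * m p s t)"
      unfolding trinomial_sum_def P_def sum.cartesian_product c_def m_def
      by (intro sum.cong refl) (auto simp: mult_ac)
    ultimately show ?thesis using c_nonneg by (simp add: ennreal_mult[symmetric] mult_nonneg_nonneg)
  qed
  then have "square_integral (\<lambda>s t. ennreal (trinomial_sum n (min s t + 1/2) (max s t - min s t) (1/2 - max s t) G))
      = (\<Sum>p\<in>P. ennreal (c p) * square_integral (\<lambda>s t. ennreal (m p s t)))"
    by (subst square_integral_sum[symmetric]) (auto simp: P_def m_def intro: square_integral_cong)
  also have "\<dots> = (\<Sum>p\<in>P. ennreal (2 / ((real n + 1) * (real n + 2)) *
                     (if fst p + snd p \<le> n then G (fst p) (snd p) else 0)))"
  proof (intro sum.cong refl)
    fix p :: "nat \<times> nat"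
    obtain \<alpha> \<beta> where p: "p = (\<alpha>, \<beta>)" by (cases p)
    have "c p * (2 * (fact \<alpha> * fact \<beta> * fact (n - \<alpha> - \<beta>) / fact (\<alpha> + \<beta> + (n - \<alpha> - \<beta>) + 2)))
        = 2 / ((real n + 1) * (real n + 2)) * (if \<alpha> + \<beta> \<le> n then G \<alpha> \<beta> else 0)"
    proof (cases "\<alpha> + \<beta> \<le> n")
      case True
      have "c p * X = G \<alpha> \<beta> * (real (trinomial n \<alpha> \<beta>) * X)" for X
        unfolding c_def p by simp
      then show ?thesis using True by (simp only: trinomial_dirichlet_coefficient[OF True]) simp
    qed (simp add: c_def p trinomial_eq_0)
    moreover have "square_integral (\<lambda>s t. ennreal (m p s t))
      = ennreal (2 * (fact \<alpha> * fact \<beta> * fact (n - \<alpha> - \<beta>) / fact (\<alpha> + \<beta> + (n - \<alpha> - \<beta>) + 2)))"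
      unfolding p m_def fst_conv snd_conv by (rule square_integral_monomial)
    ultimately show "ennreal (c p) * square_integral (\<lambda>s t. ennreal (m p s t))
      = ennreal (2 / ((real n + 1) * (real n + 2)) * (if fst p + snd p \<le> n then G (fst p) (snd p) else 0))"
      using c_nonneg[of p] by (simp only: p fst_conv snd_conv ennreal_mult'[symmetric])
  qed
  also have "\<dots> = ennreal (2 / ((real n + 1) * (real n + 2)) * (\<Sum>\<alpha>\<le>n. \<Sum>\<beta>\<le>n. if \<alpha> + \<beta> \<le> n then G \<alpha> \<beta> else 0))"
    using G unfolding P_def
    by (subst sum_ennreal) (auto simp: sum_distrib_left sum.cartesian_product case_prod_beta)
  finally show ?thesis .
qed

lemma nn_integral_count_pair_integral_swap:
  "(\<integral>\<^sup>+u. count_pair_integral n H u \<partial>unif_sample n)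
   = square_integral (\<lambda>s t. \<integral>\<^sup>+u. ennreal (H (count_le n s u) (count_le n t u)) \<partial>unif_sample n)"
proof -
  let ?P = "unif_sample n"
  interpret pair_sigma_finite ?P lborel
    by (rule pair_sigma_finite.intro[OF prob_space_imp_sigma_finite[OF prob_space_unif_sample]
          lborel.sigma_finite_measure_axioms])
  let ?f = "\<lambda>u s t. ennreal (H (count_le n s u) (count_le n t u))"
  have outer_measurable [measurable]:
      "(\<lambda>(u, s). indicator unif_interval s * (\<integral>\<^sup>+t. indicator unif_interval t * ?f u s t \<partial>lborel))
         \<in> borel_measurable (?P \<Otimes>\<^sub>M lborel)"
    and inner_measurable [measurable]:
      "(\<lambda>(u, t). indicator unif_interval t * ?f u s t) \<in> borel_measurable (?P \<Otimes>\<^sub>M lborel)"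
    and [measurable]:
      "(\<lambda>u. \<integral>\<^sup>+t. indicator unif_interval t * ?f u s t \<partial>lborel) \<in> borel_measurable ?P"
      "(\<lambda>u. ?f u s t) \<in> borel_measurable ?P" for s t
    unfolding count_le_eq_sum unif_sample_def by measurable
  have "(\<integral>\<^sup>+u. count_pair_integral n H u \<partial>?P)
      = (\<integral>\<^sup>+s. (\<integral>\<^sup>+u. indicator unif_interval s *
           (\<integral>\<^sup>+t. indicator unif_interval t * ?f u s t \<partial>lborel) \<partial>?P) \<partial>lborel)"
    unfolding count_pair_integral_def square_integral_def using Fubini'[OF outer_measurable] by simp
  also have "\<dots> = (\<integral>\<^sup>+s. indicator unif_interval s *
      (\<integral>\<^sup>+u. (\<integral>\<^sup>+t. indicator unif_interval t * ?f u s t \<partial>lborel) \<partial>?P) \<partial>lborel)"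
    by (intro nn_integral_cong nn_integral_cmult) measurable
  also have "\<dots> = (\<integral>\<^sup>+s. indicator unif_interval s *
      (\<integral>\<^sup>+t. (\<integral>\<^sup>+u. indicator unif_interval t * ?f u s t \<partial>?P) \<partial>lborel) \<partial>lborel)"
    using Fubini'[OF inner_measurable] by simp
  also have "\<dots> = (\<integral>\<^sup>+s. indicator unif_interval s *
      (\<integral>\<^sup>+t. indicator unif_interval t * (\<integral>\<^sup>+u. ?f u s t \<partial>?P) \<partial>lborel) \<partial>lborel)"
    by (intro nn_integral_cong arg_cong2[where f="(*)"] refl nn_integral_cmult) measurable
  finally show ?thesis unfolding square_integral_def .
qed

lemma nn_integral_count_le_pair_sym:
  assumes "s \<in> unif_interval" "t \<in> unif_interval" and H: "\<And>k l. 0 \<le> H k l" "\<And>k l. H k l = H l k"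
  shows "(\<integral>\<^sup>+u. ennreal (H (count_le n s u) (count_le n t u)) \<partial>unif_sample n)
       = ennreal (trinomial_sum n (min s t + 1/2) (max s t - min s t) (1/2 - max s t)
                   (\<lambda>\<alpha> \<beta>. H \<alpha> (\<alpha> + \<beta>)))"
proof (cases "s \<le> t")
  case True
  then show ?thesis using nn_integral_count_le_pair[of s t H n] assms by simp
next
  case False
  have "(\<lambda>u. ennreal (H (count_le n s u) (count_le n t u))) = (\<lambda>u. ennreal (H (count_le n t u) (count_le n s u)))"
    by (intro ext arg_cong[where f=ennreal] H(2))
  then show ?thesis using nn_integral_count_le_pair[of t s H n] assms False by (simp add: min_def max_def)
qed

definition simplex_mean :: "nat \<Rightarrow> (nat \<Rightarrow> nat \<Rightarrow> real) \<Rightarrow> real" where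
  "simplex_mean n H = 2 / ((real n + 1) * (real n + 2)) *
     (\<Sum>\<alpha>\<le>n. \<Sum>\<beta>\<le>n. if \<alpha> + \<beta> \<le> n then H \<alpha> (\<alpha> + \<beta>) else 0)"

lemma simplex_mean_nonneg: "(\<And>k l. 0 \<le> H k l) \<Longrightarrow> 0 \<le> simplex_mean n H"
  unfolding simplex_mean_def by (intro mult_nonneg_nonneg sum_nonneg) auto

lemma nn_integral_count_pair_integral:
  assumes H: "\<And>k l. 0 \<le> H k l" "\<And>k l. H k l = H l k"
  shows "(\<integral>\<^sup>+u. count_pair_integral n H u \<partial>unif_sample n) = ennreal (simplex_mean n H)"
proof -
  have "(\<integral>\<^sup>+u. count_pair_integral n H u \<partial>unif_sample n)
      = square_integral (\<lambda>s t. ennreal (trinomial_sum n (min s t + 1/2) (max s t - min s t)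
      (1/2 - max s t) (\<lambda>\<alpha> \<beta>. H \<alpha> (\<alpha> + \<beta>))))"
    unfolding nn_integral_count_pair_integral_swap
    by (intro square_integral_cong nn_integral_count_le_pair_sym H)
  also have "\<dots> = ennreal (simplex_mean n H)"
    unfolding simplex_mean_def using H by (intro square_integral_trinomial_sum) simp
  finally show ?thesis .
qed

section \<open>A lattice point sum\<close>

lemma sum_abs_double_minus_add_2:
  "(\<Sum>\<alpha>\<le>m + 2. \<bar>2 * int \<alpha> - int (m + 2)\<bar>) = (\<Sum>\<alpha>\<le>m. \<bar>2 * int \<alpha> - int m\<bar>) + 2 * int m + 4"
proof -
  have "m + 2 = Suc (Suc m)" by simp
  then have "(\<Sum>\<alpha>\<le>m + 2. \<bar>2 * int \<alpha> - int (m + 2)\<bar>) = (\<Sum>\<alpha>\<le>Suc (Suc m). \<bar>2 * int \<alpha> - int (Suc (Suc m))\<bar>)"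
    by (simp only:)
  also have "\<dots> = int m + 2 + (\<Sum>\<alpha><Suc (Suc m). \<bar>2 * int (Suc \<alpha>) - int (Suc (Suc m))\<bar>)"
    by (subst sum.atMost_shift) simp
  also have "(\<Sum>\<alpha><Suc (Suc m). \<bar>2 * int (Suc \<alpha>) - int (Suc (Suc m))\<bar>) = (\<Sum>\<alpha>\<le>Suc m. \<bar>2 * int \<alpha> - int m\<bar>)"
    by (simp add: lessThan_Suc_atMost algebra_simps)
  also have "\<dots> = (\<Sum>\<alpha>\<le>m. \<bar>2 * int \<alpha> - int m\<bar>) + (int m + 2)" by simp
  finally show ?thesis by simp
qed

lemma sum_abs_double_minus:
  "2 * (\<Sum>\<alpha>\<le>m. \<bar>2 * int \<alpha> - int m\<bar>) + (if even m then 1 else 0) = (int m + 1)^2"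
proof (induction m rule: nat_induct2)
  case (step m)
  then show ?case
    by (simp only: sum_abs_double_minus_add_2) (simp add: power2_eq_square algebra_simps)
qed simp_all

lemma sum_simplex_indicator:
  "n \<le> N \<Longrightarrow> 2 * (\<Sum>\<alpha>\<le>N. \<Sum>\<beta>\<le>N. if \<alpha> + \<beta> \<le> n then 1 else 0 :: int) = (int n + 1) * (int n + 2)"
proof (induction n)
  case 0
  have "(\<Sum>\<alpha>\<le>N. \<Sum>\<beta>\<le>N. if \<alpha> + \<beta> \<le> 0 then 1 else 0 :: int)
      = (\<Sum>\<alpha>\<le>N. if \<alpha> = 0 then (\<Sum>\<beta>\<le>N. if \<beta> = 0 then 1 else 0) else 0)"
    by (intro sum.cong refl) auto
  also have "\<dots> = 1" by (simp add: sum.delta)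
  finally show ?case by simp
next
  case (Suc n)
  have "(\<Sum>\<alpha>\<le>N. \<Sum>\<beta>\<le>N. if \<alpha> + \<beta> \<le> Suc n then 1 else 0 :: int)
      = (\<Sum>\<alpha>\<le>N. (if \<alpha> \<le> Suc n then 1 else 0) + (\<Sum>\<beta><N. if \<alpha> + \<beta> \<le> n then 1 else 0))"
    by (intro sum.cong refl) (subst sum.atMost_shift, simp)
  also have "\<dots> = (\<Sum>\<alpha>\<le>N. (if \<alpha> \<le> Suc n then 1 else 0) + (\<Sum>\<beta>\<le>N. if \<alpha> + \<beta> \<le> n then 1 else 0))"
    using Suc.prems by (intro sum.cong refl) (simp add: lessThan_Suc_atMost[symmetric])
  also have "\<dots> = int (n + 2) + (\<Sum>\<alpha>\<le>N. \<Sum>\<beta>\<le>N. if \<alpha> + \<beta> \<le> n then 1 else 0)"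
  proof -
    have "(\<Sum>\<alpha>\<le>N. if \<alpha> \<le> Suc n then 1 else 0 :: int) = (\<Sum>\<alpha>\<in>{..Suc n}. 1)"
      using Suc.prems by (intro sum.mono_neutral_cong_right) auto
    then show ?thesis by (simp add: sum.distrib)
  qed
  finally show ?case using Suc by (simp add: algebra_simps)
qed

definition simplex_excess :: "nat \<Rightarrow> nat \<Rightarrow> nat \<Rightarrow> int" where
  "simplex_excess n \<alpha> \<beta> = (if \<alpha> + \<beta> \<le> n then \<bar>2 * int \<alpha> + int \<beta> - int n\<bar> - int \<beta> else 0)"

lemma sum_simplex_excess:
  "n \<le> N \<Longrightarrow> 4 * (\<Sum>\<alpha>\<le>N. \<Sum>\<beta>\<le>N. simplex_excess n \<alpha> \<beta>) + (if even n then 1 else 0) = (int n + 1)^2"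
proof (induction n)
  case 0
  have "(\<Sum>\<alpha>\<le>N. \<Sum>\<beta>\<le>N. simplex_excess 0 \<alpha> \<beta>) = 0"
    unfolding simplex_excess_def by (intro sum.neutral ballI) auto
  then show ?case by simp
next
  case (Suc n)
  let ?I = "\<lambda>\<alpha> \<beta>. if \<alpha> + \<beta> \<le> n then 1 else 0 :: int"
  have "(\<Sum>\<alpha>\<le>N. \<Sum>\<beta>\<le>N. simplex_excess (Suc n) \<alpha> \<beta>)
      = (\<Sum>\<alpha>\<le>N. simplex_excess (Suc n) \<alpha> 0 + (\<Sum>\<beta><N. simplex_excess n \<alpha> \<beta> - ?I \<alpha> \<beta>))"
    unfolding simplex_excess_def by (intro sum.cong refl) (subst sum.atMost_shift, auto intro!: sum.cong)
  also have "\<dots> = (\<Sum>\<alpha>\<le>N. simplex_excess (Suc n) \<alpha> 0 + (\<Sum>\<beta>\<le>N. simplex_excess n \<alpha> \<beta> - ?I \<alpha> \<beta>))"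
    using Suc.prems
    by (intro sum.cong refl) (simp add: lessThan_Suc_atMost[symmetric] simplex_excess_def)
  also have "\<dots> = (\<Sum>\<alpha>\<le>Suc n. \<bar>2 * int \<alpha> - int (Suc n)\<bar>)
      + (\<Sum>\<alpha>\<le>N. \<Sum>\<beta>\<le>N. simplex_excess n \<alpha> \<beta>) - (\<Sum>\<alpha>\<le>N. \<Sum>\<beta>\<le>N. ?I \<alpha> \<beta>)"
  proof -
    have "(\<Sum>\<alpha>\<le>N. simplex_excess (Suc n) \<alpha> 0) = (\<Sum>\<alpha>\<le>Suc n. \<bar>2 * int \<alpha> - int (Suc n)\<bar>)"
      using Suc.prems unfolding simplex_excess_def by (intro sum.mono_neutral_cong_right) auto
    then show ?thesis by (simp add: sum.distrib sum_subtractf)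
  qed
  finally show ?case
    using Suc sum_simplex_indicator[of n N] sum_abs_double_minus[of "Suc n"]
    by (cases "even n") (simp_all add: power2_eq_square algebra_simps)
qed

lemma simplex_mean_abs_difference_le:
  "simplex_mean n (\<lambda>k l. \<bar>real k + real l - real n\<bar>) - simplex_mean n (\<lambda>k l. \<bar>real k - real l\<bar>) \<le> 1/2"
proof -
  define X where "X = (\<Sum>\<alpha>\<le>n. \<Sum>\<beta>\<le>n. simplex_excess n \<alpha> \<beta>)"
  define D where "D = (real n + 1) * (real n + 2)"
  have "real_of_int X = (\<Sum>\<alpha>\<le>n. \<Sum>\<beta>\<le>n.
      (if \<alpha> + \<beta> \<le> n then \<bar>real \<alpha> + real (\<alpha> + \<beta>) - real n\<bar> else 0)
      - (if \<alpha> + \<beta> \<le> n then \<bar>real \<alpha> - real (\<alpha> + \<beta>)\<bar> else 0))"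
    unfolding X_def of_int_sum by (intro sum.cong refl) (simp add: simplex_excess_def)
  also have "\<dots> = (\<Sum>\<alpha>\<le>n. \<Sum>\<beta>\<le>n. if \<alpha> + \<beta> \<le> n then \<bar>real \<alpha> + real (\<alpha> + \<beta>) - real n\<bar> else 0)
      - (\<Sum>\<alpha>\<le>n. \<Sum>\<beta>\<le>n. if \<alpha> + \<beta> \<le> n then \<bar>real \<alpha> - real (\<alpha> + \<beta>)\<bar> else 0)"
    by (simp add: sum_subtractf)
  finally have X_eq: "real_of_int X = \<dots>" .
  have "(int n + 1)^2 \<le> (int n + 1) * (int n + 2)"
    by (simp add: power2_eq_square)
  then have "4 * X \<le> (int n + 1) * (int n + 2)"
    using sum_simplex_excess[OF order_refl, of n] unfolding X_def[symmetric]
    by (smt (verit))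
  then have "real_of_int (4 * X) \<le> real_of_int ((int n + 1) * (int n + 2))"
    by (simp only: of_int_le_iff)
  then have "4 * real_of_int X \<le> D"
    unfolding D_def by simp
  moreover have "0 < D" unfolding D_def by simp
  ultimately have "2 / D * real_of_int X \<le> 1/2"
    by (simp add: pos_divide_le_eq)
  then show ?thesis unfolding X_eq D_def simplex_mean_def by (simp only: right_diff_distrib)
qed

lemma AE_unif_sample_in_interval: "AE u in unif_sample n. \<forall>j<n. u j \<in> unif_interval"
proof -
  have "AE u in unif_sample n. u j \<in> unif_interval" if "j < n" for j
  proof -
    have "distr (unif_sample n) unif (\<lambda>u. u j) = unif"
      unfolding unif_sample_def using that prob_space_unif by (intro distr_PiM_component) auto
    moreover have "AE x in unif. x \<in> unif_interval" by (rule AE_uniform_measureI) auto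
    ultimately have "AE x in distr (unif_sample n) unif (\<lambda>u. u j). x \<in> unif_interval" by (simp only:)
    then show ?thesis
      by (rule AE_distrD[rotated]) (use that in \<open>simp add: unif_sample_def\<close>)
  qed
  then show ?thesis by (subst AE_all_countable) auto
qed

lemma measurable_count_pair_integral [measurable]:
  "(\<lambda>u. count_pair_integral n H u) \<in> borel_measurable (unif_sample n)"
  unfolding count_pair_integral_def square_integral_def count_le_eq_sum unif_sample_def by measurable

lemma emeasure_add_nn_integral_le:
  assumes "A \<in> sets M" "g \<in> borel_measurable M" "AE x in M. indicator A x + g x \<le> f x"
  shows "emeasure M A + (\<integral>\<^sup>+x. g x \<partial>M) \<le> (\<integral>\<^sup>+x. f x \<partial>M)"
proof -
  have "emeasure M A + (\<integral>\<^sup>+x. g x \<partial>M) = (\<integral>\<^sup>+x. indicator A x + g x \<partial>M)"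
    using assms by (simp add: nn_integral_add)
  also have "\<dots> \<le> (\<integral>\<^sup>+x. f x \<partial>M)"
    using assms(3) by (rule nn_integral_mono_AE)
  finally show ?thesis .
qed

lemma AE_indicator_add_count_pair_integral_le:
  "AE u in unif_sample n.
     indicator {u \<in> space (unif_sample n). (\<Sum>i<n. (order_stat n u i + order_stat n u (n - 1 - i))^2) \<ge> 1} u
       + count_pair_integral n (\<lambda>k l. \<bar>real k - real l\<bar>) u
     \<le> count_pair_integral n (\<lambda>k l. \<bar>real k + real l - real n\<bar>) u"
  using AE_unif_sample_in_interval
proof eventually_elim
  case (elim u)
  have le: "indicator {u \<in> space (unif_sample n). (\<Sum>i<n. (order_stat n u i + order_stat n u (n - 1 - i))^2) \<ge> 1} u
      \<le> ennreal (\<Sum>i<n. (order_stat n u i + order_stat n u (n - 1 - i))^2)"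
    by (auto simp: indicator_def)
  have eq: "ennreal (\<Sum>i<n. (order_stat n u i + order_stat n u (n - 1 - i))^2)
      + count_pair_integral n (\<lambda>k l. \<bar>real k - real l\<bar>) u
    = count_pair_integral n (\<lambda>k l. \<bar>real k + real l - real n\<bar>) u"
    using elim by (intro sum_order_stat_pair_square_add) auto
  show ?case unfolding eq[symmetric] using le by (rule add_right_mono)
qed

theorem mainTheorem7:
  fixes n :: nat
  shows "measure (unif_sample n)
     {u \<in> space (unif_sample n).
        (\<Sum>i<n. (order_stat n u i + order_stat n u (n - 1 - i))^2) \<ge> 1} \<le> 1/2"
proof -
  define A where "A = {u \<in> space (unif_sample n).
    (\<Sum>i<n. (order_stat n u i + order_stat n u (n - 1 - i))^2) \<ge> 1}"
  let ?E = "simplex_mean n (\<lambda>k l. \<bar>real k + real l - real n\<bar>)"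
  let ?D = "simplex_mean n (\<lambda>k l. \<bar>real k - real l\<bar>)"
  interpret prob_space "unif_sample n" by (rule prob_space_unif_sample)
  \<comment> \<open>A non-measurable event has measure 0.\<close>
  show ?thesis
  proof (cases "A \<in> sets (unif_sample n)")
    case True
    have "emeasure (unif_sample n) A + ennreal ?D \<le> ennreal ?E"
      using emeasure_add_nn_integral_le[OF True measurable_count_pair_integral
          AE_indicator_add_count_pair_integral_le[of n, folded A_def]]
      by (simp add: nn_integral_count_pair_integral abs_minus_commute add.commute)
    then have "measure (unif_sample n) A \<le> ?E - ?D"
      using simplex_mean_nonneg[of "\<lambda>k l. \<bar>real k - real l\<bar>" n]
        simplex_mean_nonneg[of "\<lambda>k l. \<bar>real k + real l - real n\<bar>" n]
      by (simp add: emeasure_eq_measure ennreal_plus[symmetric] ennreal_le_iff del: ennreal_plus)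
    also have "\<dots> \<le> 1/2" by (rule simplex_mean_abs_difference_le)
    finally show ?thesis unfolding A_def .
  next
    case False
    then show ?thesis unfolding A_def[symmetric] by (simp add: measure_notin_sets)
  qed
qed

end
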